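(* Let $X,Y$ be random variables on finite sets $\mathcal{X},\mathcal{Y}$ with joint pmf $P_{XY}$. Let $\lambda_{\min}<\lambda_{\max}$ and $\Delta>0$ be such that $N=(\lambda_{\max}-\lambda_{\min})/\Delta$ is a positive integer, and let $l$ be a hash length. Run the Interactive Slepian–Wolf protocol described in the context with parameters $l$ and $\Delta$, and let $\hat X=\hat X(x,y)$ denote party 2's estimate at the end, with the convention $\hat X=\emptyset$ if an error is declared. Then for every $1\le i\le N$ and every $(x,y)\in\mathcal{T}_i$: (i) the protocol sends at most $l+(i-1)\Delta+i$ bits; (ii) $\Pr(\hat X\neq x\mid X=x,Y=y)\le i\,2^{\lambda_{\min}+\Delta-l}$.
   Context: All logarithms are to base 2, and $h(x|y)=-\log P_{X|Y}(x|y)$. Put $\lambda_i=\lambda_{\min}+(i-1)\Delta$, and for $1\le i\le N$ let $\mathcal{T}_i=\{(x,y):\lambda_i\le h(x|y)<\lambda_i+\Delta\}$. The parameters $l$ and $\Delta$ are used as hash lengths in bits (implicitly integers). The Interactive Slepian–Wolf protocol uses public randomness shared by both parties and proceeds in rounds as follows. Round 1. A map $h_1$ is drawn uniformly from all maps $\mathcal{X}\to\{0,1\}^l$, and party 1 sends $\Pi_1=h_1(X)$. If party 2 finds a unique $x$ with $(x,Y)\in\mathcal{T}_1$ and $h_1(x)=\Pi_1$, it sets $\hat X=x$ and sends a one-bit ACK; otherwise it sends a one-bit NACK. Round $i$, for $i=2,\dots,N$, performed only while no ACK has been sent. A map $h_i$ is drawn uniformly from all maps $\mathcal{X}\to\{0,1\}^\Delta$,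 independently of earlier maps, and party 1 sends $\Pi_{2i-1}=h_i(X)$. Party 2 looks for $x$ with $(x,Y)\in\mathcal{T}_i$ and $h_j(x)=\Pi_{2j-1}$ for all $j\le i$. - If exactly one such $x$ exists, party 2 sets $\hat X=x$ and sends ACK. - If more than one exists, an error is declared. - If none exists, party 2 sends NACK. Termination. If no $\hat X$ is found at the end, an error is declared. *)

theory Defs
  imports "HOL-Probability.Probability"
begin

definition condp :: "('x \<times> 'y) pmf \<Rightarrow> 'x \<Rightarrow> 'y \<Rightarrow> real" where
  "condp PXY x y = pmf PXY (x, y) / measure_pmf.prob PXY {p. snd p = y}"

definition hcond :: "('x \<times> 'y) pmf \<Rightarrow> 'x \<Rightarrow> 'y \<Rightarrow> real" where
  "hcond PXY x y = - log 2 (condp PXY x y)"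

text \<open>The slice T_i (i >= 1); pairs with P(x|y)=0 have h = +infinity and lie in no slice.\<close>
definition Tset :: "('x \<times> 'y) pmf \<Rightarrow> real \<Rightarrow> nat \<Rightarrow> nat \<Rightarrow> ('x \<times> 'y) set" where
  "Tset PXY lmin \<Delta> i = {(x, y). condp PXY x y > 0 \<and>
      lmin + (real i - 1) * real \<Delta> \<le> hcond PXY x y \<and>
      hcond PXY x y < lmin + (real i - 1) * real \<Delta> + real \<Delta>}"

definition hash_len :: "nat \<Rightarrow> nat \<Rightarrow> nat \<Rightarrow> nat" where
  "hash_len l \<Delta> i = (if i = 1 then l else \<Delta>)"

text \<open>Public randomness: a family of maps h_1..h_N, h_i : X -> {0,1}^{len i}
  (bit strings encoded as naturals below 2^{len i}); unused indices are fixed to 0.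
  The uniform distribution on this set is the product of independent uniform maps.\<close>
definition hash_space :: "nat \<Rightarrow> nat \<Rightarrow> nat \<Rightarrow> (nat \<Rightarrow> 'x \<Rightarrow> nat) set" where
  "hash_space l \<Delta> N = {H. \<forall>i x. (i \<in> {1..N} \<longrightarrow> H i x < 2 ^ hash_len l \<Delta> i) \<and>
                                 (i \<notin> {1..N} \<longrightarrow> H i x = 0)}"

definition cands :: "('x \<times> 'y) pmf \<Rightarrow> real \<Rightarrow> nat \<Rightarrow> (nat \<Rightarrow> 'x \<Rightarrow> nat) \<Rightarrow> 'x \<Rightarrow> 'y \<Rightarrow> nat \<Rightarrow> 'x set" where
  "cands PXY lmin \<Delta> H x y i =
     {x'. (x', y) \<in> Tset PXY lmin \<Delta> i \<and> (\<forall>j\<in>{1..i}. H j x' = H j x)}"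

text \<open>Round at which the protocol stops: the first round with a nonempty candidate set
  (ACK or error), or N if every round ended with NACK.\<close>
definition stop_round :: "('x \<times> 'y) pmf \<Rightarrow> real \<Rightarrow> nat \<Rightarrow> nat \<Rightarrow> (nat \<Rightarrow> 'x \<Rightarrow> nat) \<Rightarrow> 'x \<Rightarrow> 'y \<Rightarrow> nat" where
  "stop_round PXY lmin \<Delta> N H x y =
     (if \<exists>i\<in>{1..N}. cands PXY lmin \<Delta> H x y i \<noteq> {}
      then (LEAST i. i \<in> {1..N} \<and> cands PXY lmin \<Delta> H x y i \<noteq> {}) else N)"

text \<open>Party 2's estimate; None encodes an error (X-hat = empty set).\<close>
definition estimate :: "('x \<times> 'y) pmf \<Rightarrow> real \<Rightarrow> nat \<Rightarrow> nat \<Rightarrow> (nat \<Rightarrow> 'x \<Rightarrow> nat) \<Rightarrow> 'x \<Rightarrow> 'y \<Rightarrow> 'x option" where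
  "estimate PXY lmin \<Delta> N H x y =
     (if \<exists>i\<in>{1..N}. cands PXY lmin \<Delta> H x y i \<noteq> {}
      then (let C = cands PXY lmin \<Delta> H x y (stop_round PXY lmin \<Delta> N H x y) in
            if card C = 1 then Some (the_elem C) else None)
      else None)"

text \<open>Number of bits communicated: in each round r up to the stopping round,
  party 1 sends hash_len r bits and party 2 sends one feedback bit.\<close>
definition bits_sent :: "('x \<times> 'y) pmf \<Rightarrow> real \<Rightarrow> nat \<Rightarrow> nat \<Rightarrow> nat \<Rightarrow> (nat \<Rightarrow> 'x \<Rightarrow> nat) \<Rightarrow> 'x \<Rightarrow> 'y \<Rightarrow> nat" where
  "bits_sent PXY lmin l \<Delta> N H x y =
     (\<Sum>r\<in>{1..stop_round PXY lmin \<Delta> N H x y}. hash_len l \<Delta> r + 1)"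

end

theory Submission
  imports Defs
begin

(*
  Party 1's x is itself a candidate in round i, so the protocol stops after at most i rounds,
  which gives the bound on the communication.  An error needs some x' \<noteq> x in a slice T_j,
  j \<le> i, whose first j hashes agree with those of x; for uniformly random hashes this has
  probability 2^-(l+(j-1)\<Delta>).  Every x' in T_j has P(x'|y) > 2^-(\<lambda>min+j\<Delta>), so T_j has
  at most 2^(\<lambda>min+j\<Delta>) elements, and a union bound over x' and j gives i 2^(\<lambda>min+\<Delta>-l).
*)

lemma measure_pair_pmf_times:
  "measure_pmf.prob (pair_pmf p q) (A \<times> B) = measure_pmf.prob p A * measure_pmf.prob q B"
proof -
  have "(A \<times> B) \<inter> set_pmf (pair_pmf p q) = (A \<inter> set_pmf p) \<times> (B \<inter> set_pmf q)"
    by auto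
  then have "measure_pmf.prob (pair_pmf p q) (A \<times> B)
      = measure_pmf.prob (pair_pmf p q) ((A \<inter> set_pmf p) \<times> (B \<inter> set_pmf q))"
    by (metis measure_Int_set_pmf)
  also have "\<dots> = measure_pmf.prob p (A \<inter> set_pmf p) * measure_pmf.prob q (B \<inter> set_pmf q)"
    by (intro measure_pmf_prob_product) (auto intro: countable_subset)
  finally show ?thesis
    by (simp add: measure_Int_set_pmf)
qed

lemma prob_pair_pmf_fst_cond:
  assumes "pmf p a \<noteq> 0"
  shows "measure_pmf.prob (pair_pmf p q) ({a} \<times> E) / measure_pmf.prob (pair_pmf p q) ({a} \<times> UNIV)
    = measure_pmf.prob q E"
  using assms by (simp add: measure_pair_pmf_times measure_pmf_single)

lemma sum_hash_len:
  assumes "1 \<le> s"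
  shows "(\<Sum>r\<in>{1..s}. hash_len l \<Delta> r) = l + (s - 1) * \<Delta>"
proof -
  have "(\<Sum>r\<in>{1..s}. hash_len l \<Delta> r) = l + (\<Sum>r\<in>{Suc 1..s}. hash_len l \<Delta> r)"
    using assms by (simp add: sum.atLeast_Suc_atMost hash_len_def)
  also have "(\<Sum>r\<in>{Suc 1..s}. hash_len l \<Delta> r) = (s - 1) * \<Delta>"
    by (simp add: hash_len_def)
  finally show ?thesis .
qed

lemma hash_space_nonempty: "hash_space l \<Delta> N \<noteq> {}"
  by (auto simp: hash_space_def intro!: exI[of _ "\<lambda>_ _. 0"])

lemma finite_hash_space: "finite (hash_space l \<Delta> N :: (nat \<Rightarrow> 'x::finite \<Rightarrow> nat) set)"
proof -
  let ?F = "{f. \<forall>p. (p \<in> {1..N} \<times> UNIV \<longrightarrow> f p \<in> {..<(2::nat) ^ (l + \<Delta>)})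
                   \<and> (p \<notin> {1..N} \<times> (UNIV :: 'x set) \<longrightarrow> f p = 0)}"
  have "H i x < 2 ^ (l + \<Delta>)" if "H \<in> hash_space l \<Delta> N" "i \<in> {1..N}" for H :: "nat \<Rightarrow> 'x \<Rightarrow> nat" and i x
  proof -
    have "H i x < 2 ^ hash_len l \<Delta> i" using that by (simp add: hash_space_def)
    also have "\<dots> \<le> 2 ^ (l + \<Delta>)" by (intro power_increasing) (auto simp: hash_len_def)
    finally show ?thesis .
  qed
  then have "case_prod ` hash_space l \<Delta> N \<subseteq> ?F"
    by (auto simp: hash_space_def)
  moreover have "finite ?F"
    by (intro finite_set_of_finite_funs) auto
  moreover have "inj (case_prod :: (nat \<Rightarrow> 'x \<Rightarrow> nat) \<Rightarrow> _)"
    by (intro injI) (metis curry_case_prod)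
  ultimately show ?thesis
    by (meson finite_imageD finite_subset inj_on_subset subset_UNIV)
qed

lemma card_hash_collisions:
  fixes x x' :: "'x::finite"
  assumes "x' \<noteq> x" and "j \<le> N"
  shows "card {H \<in> hash_space l \<Delta> N. \<forall>k\<in>{1..j}. H k x' = H k x} * 2 ^ (\<Sum>k\<in>{1..j}. hash_len l \<Delta> k)
           \<le> card (hash_space l \<Delta> N :: (nat \<Rightarrow> 'x \<Rightarrow> nat) set)"
proof -
  let ?S = "hash_space l \<Delta> N :: (nat \<Rightarrow> 'x \<Rightarrow> nat) set"
  let ?A = "{H \<in> ?S. \<forall>k\<in>{1..j}. H k x' = H k x}"
  let ?T = "PiE {1..j} (\<lambda>k. {..<(2::nat) ^ hash_len l \<Delta> k})"
  \<comment> \<open>Overwrite the first j hash values of x' by t; H is recovered since there they equal those of x.\<close>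
  define overwrite :: "(nat \<Rightarrow> 'x \<Rightarrow> nat) \<times> (nat \<Rightarrow> nat) \<Rightarrow> nat \<Rightarrow> 'x \<Rightarrow> nat" where
    "overwrite = (\<lambda>(H, t) k z. if z = x' \<and> k \<in> {1..j} then t k else H k z)"
  have "(H, t) = (G, u)"
    if H: "H \<in> ?A" and t: "t \<in> ?T" and G: "G \<in> ?A" and u: "u \<in> ?T"
      and eq: "overwrite (H, t) = overwrite (G, u)" for H t G u
  proof -
    have eq': "(if z = x' \<and> k \<in> {1..j} then t k else H k z) = (if z = x' \<and> k \<in> {1..j} then u k else G k z)"
      for k z using fun_cong[OF fun_cong[OF eq, of k], of z] by (simp add: overwrite_def)
    have "t k = u k" for k
      using eq'[of x' k] PiE_arb[OF t] PiE_arb[OF u] by (cases "k \<in> {1..j}") auto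
    moreover have "H k z = G k z" for k z
      using eq'[of z k] eq'[of x k] H G assms(1) by (cases "z = x' \<and> k \<in> {1..j}") auto
    ultimately show ?thesis by (simp add: fun_eq_iff)
  qed
  then have "inj_on overwrite (?A \<times> ?T)"
    by (intro inj_onI) auto
  moreover have "overwrite ` (?A \<times> ?T) \<subseteq> ?S"
    using assms(2) by (fastforce simp: overwrite_def hash_space_def PiE_iff)
  ultimately have "card (?A \<times> ?T) \<le> card ?S"
    by (intro card_inj_on_le finite_hash_space)
  moreover have "card ?T = 2 ^ (\<Sum>k\<in>{1..j}. hash_len l \<Delta> k)"
    by (simp add: card_PiE power_sum)
  ultimately show ?thesis
    by (simp add: card_cartesian_product)
qed

lemma prob_hash_collision:
  fixes x x' :: "'x::finite"
  assumes "x' \<noteq> x" and "1 \<le> j" and "j \<le> N"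
  shows "measure_pmf.prob (pmf_of_set (hash_space l \<Delta> N :: (nat \<Rightarrow> 'x \<Rightarrow> nat) set))
           {H. \<forall>k\<in>{1..j}. H k x' = H k x} \<le> 2 powr - (real l + (real j - 1) * real \<Delta>)"
proof -
  let ?S = "hash_space l \<Delta> N :: (nat \<Rightarrow> 'x \<Rightarrow> nat) set"
  define n where "n = l + (j - 1) * \<Delta>"
  have card_S: "card ?S > 0"
    by (simp add: card_gt_0_iff finite_hash_space hash_space_nonempty)
  let ?C = "?S \<inter> {H. \<forall>k\<in>{1..j}. H k x' = H k x}"
  have "card ?C * 2 ^ n \<le> card ?S"
    using card_hash_collisions[OF assms(1,3)] sum_hash_len[OF assms(2)]
    by (simp add: n_def Int_def conj_commute)
  then have "real (card ?C * 2 ^ n) \<le> real (card ?S)"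
    by (rule of_nat_mono)
  then have "real (card ?C) \<le> real (card ?S) / 2 ^ n"
    unfolding of_nat_mult of_nat_power of_nat_numeral by (simp add: le_divide_eq)
  then have "real (card ?C) / real (card ?S) \<le> (real (card ?S) / 2 ^ n) / real (card ?S)"
    by (rule divide_right_mono) simp
  also have "\<dots> = 2 powr - real n"
    using card_S by (simp add: powr_minus_divide powr_realpow)
  also have "real n = real l + (real j - 1) * real \<Delta>"
    using assms(2) by (simp add: n_def of_nat_diff)
  finally show ?thesis
    by (simp add: measure_pmf_of_set[OF hash_space_nonempty finite_hash_space])
qed

lemma sum_condp_le_one:
  assumes "finite B"
  shows "(\<Sum>x\<in>B. condp PXY x y) \<le> 1"
proof -
  define P where "P = measure_pmf.prob PXY {p. snd p = y}"
  have "(\<Sum>x\<in>B. pmf PXY (x, y)) = measure_pmf.prob PXY ((\<lambda>x. (x, y)) ` B)"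
    using assms by (simp add: measure_measure_pmf_finite sum.reindex inj_on_def)
  also have "\<dots> \<le> P"
    unfolding P_def by (intro measure_pmf.finite_measure_mono) auto
  finally have "(\<Sum>x\<in>B. pmf PXY (x, y)) \<le> P" .
  moreover have "P \<ge> 0"
    unfolding P_def by simp
  ultimately show ?thesis
    by (cases "P = 0") (simp_all add: condp_def divide_le_eq_1 flip: P_def sum_divide_distrib)
qed

lemma card_condp_gt_le:
  fixes PXY :: "('x::finite \<times> 'y) pmf"
  assumes "0 < c"
  shows "real (card {x. c < condp PXY x y}) \<le> 1 / c"
proof -
  have "real (card {x. c < condp PXY x y}) * c = (\<Sum>x\<in>{x. c < condp PXY x y}. c)"
    by simp
  also have "\<dots> \<le> (\<Sum>x\<in>{x. c < condp PXY x y}. condp PXY x y)"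
    by (intro sum_mono) simp
  also have "\<dots> \<le> 1"
    by (intro sum_condp_le_one) simp
  finally show ?thesis
    using assms by (simp add: field_simps)
qed

lemma card_slice_le:
  fixes PXY :: "('x::finite \<times> 'y) pmf"
  shows "real (card {x. (x, y) \<in> Tset PXY lmin \<Delta> j}) \<le> 2 powr (lmin + real j * real \<Delta>)"
proof -
  define L where "L = lmin + real j * real \<Delta>"
  have "condp PXY x y > 2 powr - L" if "(x, y) \<in> Tset PXY lmin \<Delta> j" for x
  proof -
    have "condp PXY x y > 0" and "- log 2 (condp PXY x y) < L"
      using that by (auto simp: Tset_def hcond_def L_def algebra_simps)
    then show ?thesis
      using less_log_iff[of 2 "condp PXY x y" "- L"] by simp
  qed
  then have "real (card {x. (x, y) \<in> Tset PXY lmin \<Delta> j}) \<le> card {x. 2 powr - L < condp PXY x y}"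
    by (intro of_nat_mono card_mono) auto
  also have "\<dots> \<le> 1 / 2 powr - L"
    by (intro card_condp_gt_le) simp
  also have "\<dots> = 2 powr L"
    by (simp add: powr_minus divide_inverse)
  finally show ?thesis
    unfolding L_def .
qed

lemma self_mem_cands:
  "(x, y) \<in> Tset PXY lmin \<Delta> i \<Longrightarrow> x \<in> cands PXY lmin \<Delta> H x y i"
  by (simp add: cands_def)

lemma stop_round_le:
  assumes "i \<in> {1..N}" and "cands PXY lmin \<Delta> H x y i \<noteq> {}"
  shows "stop_round PXY lmin \<Delta> N H x y \<in> {1..i}"
    and "cands PXY lmin \<Delta> H x y (stop_round PXY lmin \<Delta> N H x y) \<noteq> {}"
proof -
  let ?Q = "\<lambda>i. i \<in> {1..N} \<and> cands PXY lmin \<Delta> H x y i \<noteq> {}"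
  have Q: "?Q i"
    using assms by blast
  then have "stop_round PXY lmin \<Delta> N H x y = (LEAST i. ?Q i)"
    by (auto simp: stop_round_def)
  moreover have "?Q (LEAST i. ?Q i)" and "(LEAST i. ?Q i) \<le> i"
    using LeastI[of ?Q, OF Q] Least_le[of ?Q, OF Q] by auto
  ultimately show "stop_round PXY lmin \<Delta> N H x y \<in> {1..i}"
    and "cands PXY lmin \<Delta> H x y (stop_round PXY lmin \<Delta> N H x y) \<noteq> {}"
    by auto
qed

lemma bits_sent_le:
  assumes "i \<in> {1..N}" and "(x, y) \<in> Tset PXY lmin \<Delta> i"
  shows "bits_sent PXY lmin l \<Delta> N H x y \<le> l + (i - 1) * \<Delta> + i"
proof -
  define s where "s = stop_round PXY lmin \<Delta> N H x y"
  have "cands PXY lmin \<Delta> H x y i \<noteq> {}"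
    using self_mem_cands[OF assms(2)] by blast
  then have s: "s \<in> {1..i}"
    unfolding s_def by (rule stop_round_le(1)[OF assms(1)])
  have "bits_sent PXY lmin l \<Delta> N H x y = (\<Sum>r\<in>{1..s}. hash_len l \<Delta> r) + s"
    unfolding bits_sent_def sum.distrib s_def by simp
  also have "\<dots> = l + (s - 1) * \<Delta> + s"
    using s sum_hash_len[of s l \<Delta>] by simp
  also have "\<dots> \<le> l + (i - 1) * \<Delta> + i"
    using s by (auto intro!: add_mono)
  finally show ?thesis .
qed

lemma estimate_wrong_imp_collision:
  assumes "i \<in> {1..N}" and "(x, y) \<in> Tset PXY lmin \<Delta> i"
    and "estimate PXY lmin \<Delta> N H x y \<noteq> Some x"
  obtains j x' where "j \<in> {1..i}" and "x' \<noteq> x" and "(x', y) \<in> Tset PXY lmin \<Delta> j"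
    and "\<forall>k\<in>{1..j}. H k x' = H k x"
proof -
  define s where "s = stop_round PXY lmin \<Delta> N H x y"
  define C where "C = cands PXY lmin \<Delta> H x y s"
  have x_cand: "cands PXY lmin \<Delta> H x y i \<noteq> {}"
    using self_mem_cands[OF assms(2)] by blast
  then have s: "s \<in> {1..i}" and "C \<noteq> {}"
    unfolding s_def C_def by (rule stop_round_le[OF assms(1)])+
  have "estimate PXY lmin \<Delta> N H x y = (if card C = 1 then Some (the_elem C) else None)"
    using assms(1) x_cand by (auto simp: estimate_def C_def s_def Let_def)
  with assms(3) have "C \<noteq> {x}"
    by auto
  with \<open>C \<noteq> {}\<close> obtain x' where "x' \<in> C" and "x' \<noteq> x"
    by blast
  then show ?thesis
    using s that by (auto simp: C_def cands_def)
qed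

lemma prob_estimate_wrong_le:
  fixes PXY :: "('x::finite \<times> 'y) pmf"
  assumes "i \<in> {1..N}" and "(x, y) \<in> Tset PXY lmin \<Delta> i"
  shows "measure_pmf.prob (pmf_of_set (hash_space l \<Delta> N :: (nat \<Rightarrow> 'x \<Rightarrow> nat) set))
           {H. estimate PXY lmin \<Delta> N H x y \<noteq> Some x} \<le> real i * 2 powr (lmin + real \<Delta> - real l)"
proof -
  let ?U = "pmf_of_set (hash_space l \<Delta> N :: (nat \<Rightarrow> 'x \<Rightarrow> nat) set)"
  let ?B = "\<lambda>j. {x'. (x', y) \<in> Tset PXY lmin \<Delta> j} - {x}"
  let ?A = "\<lambda>j x'. {H::nat \<Rightarrow> 'x \<Rightarrow> nat. \<forall>k\<in>{1..j}. H k x' = H k x}"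
  have round_bound: "measure_pmf.prob ?U (\<Union>x'\<in>?B j. ?A j x') \<le> 2 powr (lmin + real \<Delta> - real l)"
    if j: "j \<in> {1..i}" for j
  proof -
    have "measure_pmf.prob ?U (\<Union>x'\<in>?B j. ?A j x') \<le> (\<Sum>x'\<in>?B j. measure_pmf.prob ?U (?A j x'))"
      by (intro measure_UNION_le) auto
    also have "\<dots> \<le> (\<Sum>x'\<in>?B j. 2 powr - (real l + (real j - 1) * real \<Delta>))"
      using j assms(1) by (intro sum_mono prob_hash_collision) auto
    also have "\<dots> = real (card (?B j)) * 2 powr - (real l + (real j - 1) * real \<Delta>)"
      by simp
    also have "\<dots> \<le> real (card {x'. (x', y) \<in> Tset PXY lmin \<Delta> j}) * 2 powr - (real l + (real j - 1) * real \<Delta>)"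
      by (intro mult_right_mono of_nat_mono card_mono) auto
    also have "\<dots> \<le> 2 powr (lmin + real j * real \<Delta>) * 2 powr - (real l + (real j - 1) * real \<Delta>)"
      by (intro mult_right_mono card_slice_le) simp
    also have "\<dots> = 2 powr (lmin + real j * real \<Delta> - (real l + (real j - 1) * real \<Delta>))"
      by (simp only: powr_add[symmetric] diff_conv_add_uminus)
    also have "\<dots> = 2 powr (lmin + real \<Delta> - real l)"
      by (simp add: algebra_simps)
    finally show ?thesis .
  qed
  have "{H. estimate PXY lmin \<Delta> N H x y \<noteq> Some x} \<subseteq> (\<Union>j\<in>{1..i}. \<Union>x'\<in>?B j. ?A j x')"
  proof
    fix H
    assume "H \<in> {H. estimate PXY lmin \<Delta> N H x y \<noteq> Some x}"
    then obtain j x' where "j \<in> {1..i}" "x' \<noteq> x" "(x', y) \<in> Tset PXY lmin \<Delta> j"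
        "\<forall>k\<in>{1..j}. H k x' = H k x"
      using estimate_wrong_imp_collision[OF assms] by blast
    then show "H \<in> (\<Union>j\<in>{1..i}. \<Union>x'\<in>?B j. ?A j x')"
      by blast
  qed
  then have "measure_pmf.prob ?U {H. estimate PXY lmin \<Delta> N H x y \<noteq> Some x}
      \<le> measure_pmf.prob ?U (\<Union>j\<in>{1..i}. \<Union>x'\<in>?B j. ?A j x')"
    by (intro measure_pmf.finite_measure_mono) auto
  also have "\<dots> \<le> (\<Sum>j\<in>{1..i}. measure_pmf.prob ?U (\<Union>x'\<in>?B j. ?A j x'))"
    by (intro measure_UNION_le) auto
  also have "\<dots> \<le> (\<Sum>j\<in>{1..i}. 2 powr (lmin + real \<Delta> - real l))"
    by (intro sum_mono round_bound)
  finally show ?thesis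
    by simp
qed

lemma cond_prob_estimate_wrong_le:
  fixes PXY :: "('x::finite \<times> 'y) pmf" and l :: nat
  assumes "i \<in> {1..N}" and "(x, y) \<in> Tset PXY lmin \<Delta> i"
  defines "M \<equiv> pair_pmf PXY (pmf_of_set (hash_space l \<Delta> N :: (nat \<Rightarrow> 'x \<Rightarrow> nat) set))"
  shows "measure_pmf.prob M {(xy, H). xy = (x, y) \<and> estimate PXY lmin \<Delta> N H (fst xy) (snd xy) \<noteq> Some (fst xy)}
           / measure_pmf.prob M {(xy, H). xy = (x, y)}
         \<le> real i * 2 powr (lmin + real \<Delta> - real l)"
proof -
  have pos: "pmf PXY (x, y) \<noteq> 0"
    using assms(2) by (auto simp: Tset_def condp_def)
  have error_event: "{(xy, H). xy = (x, y) \<and> estimate PXY lmin \<Delta> N H (fst xy) (snd xy) \<noteq> Some (fst xy)}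
      = {(x, y)} \<times> {H. estimate PXY lmin \<Delta> N H x y \<noteq> Some x}"
    and condition_event: "{(xy, H). xy = (x, y)} = {(x, y)} \<times> UNIV"
    by auto
  show ?thesis
    unfolding M_def error_event condition_event prob_pair_pmf_fst_cond[OF pos]
    by (rule prob_estimate_wrong_le[OF assms(1,2)])
qed

theorem lemma1:
  fixes PXY :: "('x::finite \<times> 'y::finite) pmf"
    and lmin lmax :: real and \<Delta> l N :: nat
  assumes "lmin < lmax" and "\<Delta> > 0" and "N > 0"
    and "real N = (lmax - lmin) / real \<Delta>"
  shows "\<forall>i\<in>{1..N}. \<forall>(x, y)\<in>Tset PXY lmin \<Delta> i.
     (\<forall>H\<in>hash_space l \<Delta> N. bits_sent PXY lmin l \<Delta> N H x y \<le> l + (i - 1) * \<Delta> + i) \<and>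
     (let M = pair_pmf PXY (pmf_of_set (hash_space l \<Delta> N :: (nat \<Rightarrow> 'x \<Rightarrow> nat) set)) in
        measure_pmf.prob M {(xy, H). xy = (x, y) \<and> estimate PXY lmin \<Delta> N H (fst xy) (snd xy) \<noteq> Some (fst xy)}
          / measure_pmf.prob M {(xy, H). xy = (x, y)}
        \<le> real i * 2 powr (lmin + real \<Delta> - real l))"
  \<comment> \<open>The hypotheses relating N, lmax and \<Delta> only fix the number of rounds; the bounds hold for every N.\<close>
  unfolding Let_def
  by (intro ballI case_prodI2 conjI) (blast intro: bits_sent_le cond_prob_estimate_wrong_le)+

end
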